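(* Fix $J,h\in\mathbb{R}$, a $G$-covariant transition rate $c$, $m\in\mathbb{N}$ and $p\in P_m$. For each $n\ge m$ let $\langle p\rangle_n^*$ be the minimum of $LP(p,n)$ and let $m_n^*$ be a minimizer, writing $\langle q\rangle_n^*=m_n^*(q)$ for $q\in P_n$. Then: (1) the limit $\langle p\rangle_\infty=\lim_{n\to\infty}\langle p\rangle_n^*$ exists; (2) for every $l\in\mathbb{N}$, the sequence of vectors $\big(\langle\underline{s}_A\rangle_n^*\big)_{A\subseteq D_l}\in\mathbb{R}^{2^{|D_l|}}$, $n\ge\max(m,l)$, has a convergent subsequence, indexed by some $Q\subseteq\{\max(m,l),\max(m,l)+1,\dots\}$, with limits $\langle\underline{s}_A\rangle_\infty=\lim_{n\in Q,n\to\infty}\langle\underline{s}_A\rangle_n^*$; (3) there exists a lattice-symmetric probability measure $\mu$ on $(S,V)$ which is invariant for the stochastic Ising model with rate $c$ and satisfies $\int p\,d\mu=\langle p\rangle_\infty$ and $\int\underline{s}_A\,d\mu=\langle\underline{s}_A\rangle_\infty$ for all $A\subseteq D_l$; (4) for every lattice-symmetric invariant probability measure $\mu'$ of the stochastic Ising model with rate $c$, $\int p\,d\mu\le\int p\,d\mu'$.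
   Context: $S=\{-1,1\}^{\mathbb{Z}^d}$ with $\sigma$-algebra $V$ generated by cylinder events $E(\{u_i\}_{i\in A})=\{s:s_i=u_i\ \forall i\in A\}$ ($A$ finite). $\underline{s}_A=\prod_{i\in A}s_i$ ($\underline{s}_\varnothing=1$); $P(S)$ is the real linear span of $\{\underline{s}_A:A\text{ finite}\}$; $D_n=\{i\in\mathbb{Z}^d:\|i\|_1\le n-1\}$ ($n\ge1$), $D_0=\varnothing$; $P_n$ is the span of $\{\underline{s}_A:A\subseteq D_n\}$ (functions of finitely many spins are reduced to such polynomials using $s_j^2=1$). $\bar s^i$ agrees with $s$ except $(\bar s^i)_i=-s_i$; $n(i)=\{j:\|i-j\|_1=1\}$; $F(\{u_i\}_{i\in A},s)=\prod_{i\in A}\frac{1+u_is_i}{2}$. Lattice symmetry group $G$: bijections of $\mathbb{Z}^d$ generated by unit translations, coordinate permutations and coordinate sign changes; $A\sim B$ iff $B=g(A)$ for some $g\in G$. A probability measure $\mu$ on $(S,V)$ is lattice-symmetric if $\int\underline{s}_A\,d\mu=\int\underline{s}_{g(A)}\,d\mu$ for all finite $A$ and $g\in G$. A transition rate at couplings $J,h$ is a family of strictly positive reals $c(i,s)$ such that $c(i,s)$ depends only on $s_i$ and $(s_j)_{j\in n(i)}$ and $c(i,s)\exp(hs_i+J\sum_{j\in n(i)}s_is_j)$ does not depend on $s_i$; it is $G$-covariant if $c(g(i),s\circ g^{-1})=c(i,s)$ for all $g\in G$. Example: $c^*(i,s)=C\big(1+\exp(-2hs_i-2J\sum_{j\in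 n(i)}s_is_j)\big)$, $C>0$ a constant. A probability measure $\mu$ on $(S,V)$ is invariant for the stochastic Ising model with rate $c$ if $\sum_{i\in\mathbb{Z}^d}\int c(i,s)(f(\bar s^i)-f(s))\,d\mu=0$ for all $f\in P(S)$ (only finitely many terms are nonzero; this is equivalent to the generator condition over the core of the Markov process). $LP(p,n)$ ($n\ge m$): minimize $m_n(p)$ over linear maps $m_n:P_n\to\mathbb{R}$ with (PB) $m_n(F(\{u_i\}_{i\in D_n},\cdot))\ge0$ for all $u\in\{-1,1\}^{D_n}$; (N) $m_n(1)=1$; (Sym) $m_n(\underline{s}_A)=m_n(\underline{s}_B)$ whenever $A,B\subseteq D_n$, $A\sim B$; (Inv) $\sum_{i\in D_{n-1}}m_n\big(c(i,s)(f(\bar s^i)-f(s))\big)=0$ for all $f\in P_{n-1}$. The feasible set is nonempty and compact, so the minimum is attained. *)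

theory Defs
  imports "HOL-Probability.Probability"
begin

text \<open>Sites of the lattice Z^d are functions 'd \<Rightarrow> int for a finite index type 'd
  (d = CARD('d)). A spin configuration is a function site \<Rightarrow> bool, where True encodes
  spin +1 and False encodes spin -1.\<close>

type_synonym 'd site = "'d \<Rightarrow> int"
type_synonym 'd config = "'d site \<Rightarrow> bool"

definition spin :: "'d config \<Rightarrow> 'd site \<Rightarrow> real" where
  "spin s i = (if s i then 1 else -1)"

definition spinM :: "'d config measure" where
  "spinM = PiM UNIV (\<lambda>_. count_space UNIV)"

definition l1norm :: "'d::finite site \<Rightarrow> int" where
  "l1norm i = (\<Sum>k\<in>UNIV. \<bar>i k\<bar>)"

definition D :: "nat \<Rightarrow> 'd::finite site set" where
  "D n = (if n = 0 then {} else {i. l1norm i \<le> int n - 1})"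

definition nbr :: "'d::finite site \<Rightarrow> 'd site set" where
  "nbr i = {j. l1norm (\<lambda>k. i k - j k) = 1}"

definition flip :: "'d site \<Rightarrow> 'd config \<Rightarrow> 'd config" where
  "flip i s = s(i := \<not> s i)"

definition smono :: "'d site set \<Rightarrow> 'd config \<Rightarrow> real" where
  "smono A s = (\<Prod>i\<in>A. spin s i)"

definition Poly_on :: "'d site set \<Rightarrow> ('d config \<Rightarrow> real) set" where
  "Poly_on X = {f. \<exists>\<A> a. finite \<A> \<and> (\<forall>A\<in>\<A>. finite A \<and> A \<subseteq> X)
                      \<and> f = (\<lambda>s. \<Sum>A\<in>\<A>. a A * smono A s)}"

definition PS :: "('d config \<Rightarrow> real) set" where
  "PS = Poly_on UNIV"

definition Pn :: "nat \<Rightarrow> ('d::finite config \<Rightarrow> real) set" where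
  "Pn n = Poly_on (D n)"

definition Fcyl :: "'d::finite site set \<Rightarrow> 'd config \<Rightarrow> 'd config \<Rightarrow> real" where
  "Fcyl A u s = (\<Prod>i\<in>A. (1 + spin u i * spin s i) / 2)"

definition sym_gen :: "('d site \<Rightarrow> 'd site) set" where
  "sym_gen = {(\<lambda>i. i(k := i k + 1)) | k. True} \<union> {(\<lambda>i. i(k := i k - 1)) | k. True}
     \<union> {(\<lambda>i. i \<circ> \<pi>) | \<pi>. bij \<pi>} \<union> {(\<lambda>i. i(k := - i k)) | k. True}"

text \<open>The group G generated by sym_gen (the generator set is closed under inverses,
  so the generated monoid is the generated group).\<close>
inductive_set latG :: "('d site \<Rightarrow> 'd site) set" where
  latG_id: "id \<in> latG"
| latG_step: "g \<in> latG \<Longrightarrow> t \<in> sym_gen \<Longrightarrow> t \<circ> g \<in> latG"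

definition lat_equiv :: "'d site set \<Rightarrow> 'd site set \<Rightarrow> bool" where
  "lat_equiv A B \<longleftrightarrow> (\<exists>g\<in>latG. B = g ` A)"

definition lattice_symmetric :: "'d config measure \<Rightarrow> bool" where
  "lattice_symmetric \<mu> \<longleftrightarrow> (\<forall>A g. finite A \<and> g \<in> latG \<longrightarrow>
      (\<integral>s. smono A s \<partial>\<mu>) = (\<integral>s. smono (g ` A) s \<partial>\<mu>))"

definition is_prob_on_S :: "'d config measure \<Rightarrow> bool" where
  "is_prob_on_S \<mu> \<longleftrightarrow> prob_space \<mu> \<and> sets \<mu> = sets spinM"

definition transition_rate ::
  "real \<Rightarrow> real \<Rightarrow> ('d::finite site \<Rightarrow> 'd config \<Rightarrow> real) \<Rightarrow> bool" where
  "transition_rate J h c \<longleftrightarrow>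
     (\<forall>i s. c i s > 0) \<and>
     (\<forall>i s s'. (\<forall>j\<in>insert i (nbr i). s j = s' j) \<longrightarrow> c i s = c i s') \<and>
     (\<forall>i s. c i s * exp (h * spin s i + J * (\<Sum>j\<in>nbr i. spin s i * spin s j))
          = c i (flip i s) * exp (h * spin (flip i s) i
                 + J * (\<Sum>j\<in>nbr i. spin (flip i s) i * spin (flip i s) j)))"

definition G_covariant :: "('d site \<Rightarrow> 'd config \<Rightarrow> real) \<Rightarrow> bool" where
  "G_covariant c \<longleftrightarrow> (\<forall>g\<in>latG. \<forall>i s. c (g i) (s \<circ> inv g) = c i s)"

text \<open>Invariance: the sum over i of the integrals, which has only finitely many nonzero
  terms, namely those i with f(flip i s) \<noteq> f s for some s.\<close>
definition invariant :: "('d site \<Rightarrow> 'd config \<Rightarrow> real) \<Rightarrow> 'd config measure \<Rightarrow> bool" where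
  "invariant c \<mu> \<longleftrightarrow> (\<forall>f\<in>PS.
     (\<Sum>i\<in>{i. \<exists>s. f (flip i s) \<noteq> f s}. \<integral>s. c i s * (f (flip i s) - f s) \<partial>\<mu>) = 0)"

definition LP_feasible ::
  "('d::finite site \<Rightarrow> 'd config \<Rightarrow> real) \<Rightarrow> nat \<Rightarrow> (('d config \<Rightarrow> real) \<Rightarrow> real) \<Rightarrow> bool" where
  "LP_feasible c n mn \<longleftrightarrow>
     (\<forall>f\<in>Pn n. \<forall>g\<in>Pn n. \<forall>a b. mn (\<lambda>s. a * f s + b * g s) = a * mn f + b * mn g) \<and>
     (\<forall>u. mn (Fcyl (D n) u) \<ge> 0) \<and>
     mn (\<lambda>s. 1) = 1 \<and>
     (\<forall>A B. A \<subseteq> D n \<and> B \<subseteq> D n \<and> lat_equiv A B \<longrightarrow> mn (smono A) = mn (smono B)) \<and>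
     (\<forall>f\<in>Pn (n - 1). (\<Sum>i\<in>D (n - 1). mn (\<lambda>s. c i s * (f (flip i s) - f s))) = 0)"

definition LP_optimal ::
  "('d::finite site \<Rightarrow> 'd config \<Rightarrow> real) \<Rightarrow> ('d config \<Rightarrow> real) \<Rightarrow> nat
     \<Rightarrow> (('d config \<Rightarrow> real) \<Rightarrow> real) \<Rightarrow> bool" where
  "LP_optimal c p n mn \<longleftrightarrow> LP_feasible c n mn \<and> (\<forall>m'. LP_feasible c n m' \<longrightarrow> mn p \<le> m' p)"

end

theory Submission
  imports Defs
begin

text \<open>Restricting a feasible point of \<open>LP(p, n + 1)\<close> to \<open>P\<^sub>n\<close> gives a feasible point of
  \<open>LP(p, n)\<close>, so the optimal values increase with \<open>n\<close>; they are bounded since every feasible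
  point is a positive normalized functional, and hence converge. The same positivity bounds all
  moments by one, and a diagonal argument yields a subsequence along which every moment converges.
  The limit is a positive normalized linear functional on local functions which satisfies the
  symmetry and invariance constraints in the limit; Kolmogorov's extension theorem turns it into a
  lattice-symmetric invariant probability measure. Conversely, integration against any such measure
  is feasible for every \<open>LP(p, n)\<close>, which gives the minimality.\<close>

section \<open>Local functions of the spins\<close>

definition depends_on :: "'d site set \<Rightarrow> ('d config \<Rightarrow> real) \<Rightarrow> bool" where
  "depends_on L f \<longleftrightarrow> (\<forall>s s'. (\<forall>i\<in>L. s i = s' i) \<longrightarrow> f s = f s')"

definition cylinder :: "'d site set \<Rightarrow> 'd config \<Rightarrow> 'd config set" where
  "cylinder L u = {s. \<forall>i\<in>L. s i = u i}"

text \<open>One representative for each configuration of the spins in \<open>L\<close>: the one with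
  spin \<open>-1\<close> off \<open>L\<close>.\<close>
definition configs_on :: "'d site set \<Rightarrow> 'd config set" where
  "configs_on L = {u. \<forall>i. i \<notin> L \<longrightarrow> \<not> u i}"

definition restrict_config :: "'d site set \<Rightarrow> 'd config \<Rightarrow> 'd config" where
  "restrict_config L s = (\<lambda>i. i \<in> L \<and> s i)"

lemma configs_on_eq_image: "configs_on L = (\<lambda>B i. i \<in> B) ` Pow L"
proof
  show "configs_on L \<subseteq> (\<lambda>B i. i \<in> B) ` Pow L"
  proof
    fix u assume "u \<in> configs_on L"
    then have "{i. u i} \<in> Pow L" by (auto simp: configs_on_def)
    moreover have "u = (\<lambda>i. i \<in> {i. u i})" by simp
    ultimately show "u \<in> (\<lambda>B i. i \<in> B) ` Pow L" by blast
  qed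
qed (auto simp: configs_on_def)

lemma finite_configs_on: "finite L \<Longrightarrow> finite (configs_on L)"
  by (simp add: configs_on_eq_image)

lemma restrict_config_in_configs_on: "restrict_config L s \<in> configs_on L"
  by (simp add: restrict_config_def configs_on_def)

lemma restrict_config_eq_iff:
  "u \<in> configs_on L \<Longrightarrow> restrict_config L s = u \<longleftrightarrow> s \<in> cylinder L u"
  by (auto simp: configs_on_def restrict_config_def cylinder_def fun_eq_iff)

lemma depends_on_restrict_config: "depends_on L f \<Longrightarrow> f (restrict_config L s) = f s"
  by (auto simp: depends_on_def restrict_config_def)

lemma Fcyl_eq_indicator:
  assumes "finite L"
  shows "Fcyl L u = indicator (cylinder L u)"
proof
  fix s
  have factor: "(1 + spin u i * spin s i) / 2 = (if s i = u i then 1 else 0 :: real)" for i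
    by (simp add: spin_def)
  show "Fcyl L u s = indicator (cylinder L u) s"
  proof (cases "s \<in> cylinder L u")
    case True
    then show ?thesis by (simp add: Fcyl_def factor cylinder_def)
  next
    case False
    then obtain i where "i \<in> L" "s i \<noteq> u i" by (auto simp: cylinder_def)
    with assms False show ?thesis by (auto simp: Fcyl_def factor intro!: prod_zero)
  qed
qed

lemma Fcyl_nonneg: "finite L \<Longrightarrow> 0 \<le> Fcyl L u s"
  by (simp add: Fcyl_eq_indicator)

lemma depends_on_expansion:
  assumes "finite L" and "depends_on L f"
  shows "f s = (\<Sum>u\<in>configs_on L. f u * Fcyl L u s)"
proof -
  have "(\<Sum>u\<in>configs_on L. f u * Fcyl L u s)
      = (\<Sum>u\<in>configs_on L. if restrict_config L s = u then f u else 0)"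
    by (intro sum.cong refl)
       (simp add: Fcyl_eq_indicator[OF assms(1)] restrict_config_eq_iff indicator_def)
  also have "\<dots> = f (restrict_config L s)"
    by (simp add: finite_configs_on[OF assms(1)] restrict_config_in_configs_on)
  also have "\<dots> = f s"
    by (rule depends_on_restrict_config[OF assms(2)])
  finally show ?thesis by simp
qed

lemma abs_le_sum_configs_on:
  assumes "finite L" and "depends_on L f"
  shows "\<bar>f s\<bar> \<le> (\<Sum>u\<in>configs_on L. \<bar>f u\<bar>)"
proof -
  have "f s = f (restrict_config L s)"
    by (rule depends_on_restrict_config[OF assms(2), symmetric])
  also have "\<bar>\<dots>\<bar> \<le> (\<Sum>u\<in>configs_on L. \<bar>f u\<bar>)"
    by (intro member_le_sum) (simp_all add: restrict_config_in_configs_on finite_configs_on assms(1))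
  finally show ?thesis .
qed

lemma depends_onD: "depends_on L f \<Longrightarrow> (\<And>i. i \<in> L \<Longrightarrow> s i = s' i) \<Longrightarrow> f s = f s'"
  unfolding depends_on_def by blast

lemma depends_on_mono: "depends_on L f \<Longrightarrow> L \<subseteq> L' \<Longrightarrow> depends_on L' f"
  unfolding depends_on_def by blast

lemma depends_on_const: "depends_on L (\<lambda>s. a)"
  by (simp add: depends_on_def)

lemma depends_on_smono: "A \<subseteq> L \<Longrightarrow> depends_on L (smono A)"
  unfolding depends_on_def smono_def spin_def by (auto intro!: prod.cong)

lemma depends_on_Fcyl: "finite L \<Longrightarrow> depends_on L (Fcyl L u)"
  by (simp add: depends_on_def Fcyl_eq_indicator cylinder_def indicator_def)

lemma depends_on_comp2:
  fixes L :: "'d site set"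
  assumes "depends_on L f" and "depends_on L g"
  shows "depends_on L (\<lambda>s. F (f s) (g s))"
  unfolding depends_on_def
proof (intro allI impI)
  fix s s' :: "'d config"
  assume "\<forall>i\<in>L. s i = s' i"
  then have "f s = f s'" "g s = g s'"
    by (auto intro: depends_onD[OF assms(1)] depends_onD[OF assms(2)])
  then show "F (f s) (g s) = F (f s') (g s')" by simp
qed

lemma depends_on_sum:
  "(\<And>x. x \<in> I \<Longrightarrow> depends_on L (g x)) \<Longrightarrow> depends_on L (\<lambda>s. \<Sum>x\<in>I. a x * g x s)"
  unfolding depends_on_def by (auto intro!: sum.cong)

lemma depends_on_flip:
  fixes L :: "'d site set"
  assumes "depends_on L f"
  shows "depends_on (insert i L) (\<lambda>s. f (flip i s))"
  unfolding depends_on_def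
proof (intro allI impI)
  fix s s' :: "'d config"
  assume "\<forall>j\<in>insert i L. s j = s' j"
  then have "\<forall>j\<in>L. flip i s j = flip i s' j"
    by (simp add: flip_def)
  then show "f (flip i s) = f (flip i s')"
    by (auto intro: depends_onD[OF assms])
qed

lemma flip_sites_subset:
  assumes "depends_on L f"
  shows "{i. \<exists>s. f (flip i s) \<noteq> f s} \<subseteq> L"
proof
  fix i
  assume "i \<in> {i. \<exists>s. f (flip i s) \<noteq> f s}"
  then obtain s where "f (flip i s) \<noteq> f s" by blast
  with assms show "i \<in> L" unfolding depends_on_def flip_def by (metis fun_upd_other)
qed

lemma abs_smono: "\<bar>smono A s\<bar> = 1"
  unfolding smono_def abs_prod by (rule prod.neutral) (simp add: spin_def)

lemma Poly_on_mono: "f \<in> Poly_on X \<Longrightarrow> X \<subseteq> Y \<Longrightarrow> f \<in> Poly_on Y"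
  unfolding Poly_on_def by blast

lemma Poly_on_imp_depends_on: "f \<in> Poly_on X \<Longrightarrow> depends_on X f"
  unfolding Poly_on_def by (auto intro!: depends_on_sum depends_on_smono)

lemma Fcyl_eq_sum_smono:
  fixes L :: "'d::finite site set"
  assumes "finite L"
  shows "Fcyl L u s = (\<Sum>X\<in>Pow L. ((\<Prod>i\<in>X. spin u i / 2) * (1/2) ^ card (L - X)) * smono X s)"
proof -
  have "Fcyl L u s = (\<Prod>i\<in>L. spin u i / 2 * spin s i + 1/2)"
    unfolding Fcyl_def by (auto intro!: prod.cong simp: field_simps)
  also have "\<dots> = (\<Sum>X\<in>Pow L. (\<Prod>i\<in>X. spin u i / 2 * spin s i) * (\<Prod>i\<in>L - X. 1/2))"
    by (rule prod_add[OF assms])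
  also have "\<dots> = (\<Sum>X\<in>Pow L. ((\<Prod>i\<in>X. spin u i / 2) * (1/2) ^ card (L - X)) * smono X s)"
    by (intro sum.cong refl) (simp only: smono_def prod.distrib prod_constant mult_ac)
  finally show ?thesis .
qed

lemma depends_on_imp_Poly_on:
  fixes L :: "'d::finite site set"
  assumes "finite L" and "depends_on L f"
  shows "f \<in> Poly_on L"
proof -
  define a where
    "a X = (\<Sum>u\<in>configs_on L. f u * ((\<Prod>i\<in>X. spin u i / 2) * (1/2) ^ card (L - X)))" for X
  have "f s = (\<Sum>X\<in>Pow L. a X * smono X s)" for s
    unfolding depends_on_expansion[OF assms, of s] Fcyl_eq_sum_smono[OF assms(1)] a_def
      sum_distrib_left sum_distrib_right
    by (subst sum.swap) (simp add: mult.assoc)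
  moreover have "\<forall>X\<in>Pow L. finite X \<and> X \<subseteq> L"
    using assms(1) by (auto intro: finite_subset)
  ultimately show ?thesis
    unfolding Poly_on_def using assms(1) by (intro CollectI exI[of _ "Pow L"] exI[of _ a]) auto
qed

lemma abs_le_l1norm: "\<bar>i k\<bar> \<le> l1norm i"
  unfolding l1norm_def by (rule member_le_sum) auto

lemma finite_D: "finite (D n :: 'd::finite site set)"
proof (rule finite_subset)
  show "D n \<subseteq> PiE UNIV (\<lambda>_::'d. {- int n..int n})"
  proof
    fix i :: "'d site"
    assume "i \<in> D n"
    then have "l1norm i \<le> int n" by (auto simp: D_def split: if_splits)
    then have "i k \<in> {- int n..int n}" for k
      using abs_le_l1norm[of i k] by auto
    then show "i \<in> PiE UNIV (\<lambda>_::'d. {- int n..int n})" by auto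
  qed
qed (rule finite_PiE; simp)

lemma D_mono: "n \<le> n' \<Longrightarrow> D n \<subseteq> D n'"
  by (auto simp: D_def)

lemma finite_imp_subset_D:
  fixes A :: "'d::finite site set"
  assumes "finite A"
  obtains n where "A \<subseteq> D n"
proof
  let ?n = "Max (insert 0 ((\<lambda>x. nat (l1norm x) + 1) ` A))"
  show "A \<subseteq> D ?n"
  proof
    fix x
    assume "x \<in> A"
    then have "nat (l1norm x) + 1 \<le> ?n"
      using assms by (intro Max_ge) auto
    moreover have "x \<in> D (nat (l1norm x) + 1)"
      by (simp add: D_def)
    ultimately show "x \<in> D ?n"
      using D_mono by blast
  qed
qed

lemma finite_nbr: "finite (nbr (i :: 'd::finite site))"
proof (rule finite_subset)
  show "nbr i \<subseteq> PiE UNIV (\<lambda>k. {i k - 1..i k + 1})"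
  proof
    fix j
    assume "j \<in> nbr i"
    then have "j k \<in> {i k - 1..i k + 1}" for k
      using abs_le_l1norm[of "\<lambda>k. i k - j k" k] by (auto simp: nbr_def)
    then show "j \<in> PiE UNIV (\<lambda>k. {i k - 1..i k + 1})" by auto
  qed
qed (rule finite_PiE; simp)

lemma Pn_iff_depends_on: "f \<in> Pn n \<longleftrightarrow> depends_on (D n) f"
  using Poly_on_imp_depends_on depends_on_imp_Poly_on[OF finite_D] by (auto simp: Pn_def)

lemma PS_iff_depends_on:
  fixes f :: "'d::finite config \<Rightarrow> real"
  shows "f \<in> PS \<longleftrightarrow> (\<exists>L. finite L \<and> depends_on L f)"
proof
  assume "f \<in> PS"
  then obtain \<A> a where \<A>: "finite \<A>" "\<forall>A\<in>\<A>. finite A" and f: "f = (\<lambda>s. \<Sum>A\<in>\<A>. a A * smono A s)"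
    unfolding PS_def Poly_on_def by blast
  have "depends_on (\<Union>\<A>) f"
    unfolding f by (intro depends_on_sum depends_on_smono) auto
  with \<A> show "\<exists>L. finite L \<and> depends_on L f" by blast
next
  assume "\<exists>L. finite L \<and> depends_on L f"
  then obtain L where "finite L" "depends_on L f"
    by blast
  then have "f \<in> Poly_on L"
    by (rule depends_on_imp_Poly_on)
  then show "f \<in> PS"
    unfolding PS_def by (rule Poly_on_mono) simp
qed

lemma Pn_subset_PS: "Pn n \<subseteq> PS"
proof
  fix f :: "'d::finite config \<Rightarrow> real"
  assume "f \<in> Pn n"
  then show "f \<in> PS"
    unfolding Pn_iff_depends_on PS_iff_depends_on by (intro exI[of _ "D n"]) (simp add: finite_D)
qed

lemma smono_in_PS:
  fixes A :: "'d::finite site set"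
  assumes "finite A"
  shows "smono A \<in> PS"
  unfolding PS_iff_depends_on using assms depends_on_smono[OF order_refl] by blast

lemma transition_rate_depends_on:
  "transition_rate J h c \<Longrightarrow> depends_on (insert i (nbr i)) (c i)"
  unfolding transition_rate_def depends_on_def by blast

lemma generator_term_in_PS:
  assumes c_local: "\<And>i. depends_on (insert i (nbr i)) (c i)" and "f \<in> PS"
  shows "(\<lambda>s. c i s * (f (flip i s) - f s)) \<in> PS"
proof -
  obtain L where L: "finite L" "depends_on L f"
    using \<open>f \<in> PS\<close> by (auto simp: PS_iff_depends_on)
  let ?K = "insert i (nbr i) \<union> L"
  have c: "depends_on ?K (c i)"
    by (rule depends_on_mono[OF c_local]) auto
  have flipped: "depends_on ?K (\<lambda>s. f (flip i s))"
    by (rule depends_on_mono[OF depends_on_flip[OF L(2)]]) auto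
  have f: "depends_on ?K f"
    by (rule depends_on_mono[OF L(2)]) auto
  have "depends_on ?K (\<lambda>s. c i s * (f (flip i s) - f s))"
    using depends_on_comp2[OF c depends_on_comp2[OF flipped f, of "(-)"], of "(*)"] by simp
  moreover have "finite ?K"
    using L(1) finite_nbr by simp
  ultimately show ?thesis
    unfolding PS_iff_depends_on by blast
qed

locale local_linear_functional =
  fixes L :: "'d::finite site set" and \<Phi> :: "('d config \<Rightarrow> real) \<Rightarrow> real"
  assumes linear:
    "depends_on L f \<Longrightarrow> depends_on L g \<Longrightarrow> \<Phi> (\<lambda>s. a * f s + b * g s) = a * \<Phi> f + b * \<Phi> g"
begin

lemma zero: "\<Phi> (\<lambda>s. 0) = 0"
  using linear[of "\<lambda>s. 1" "\<lambda>s. 1" 0 0] by (simp add: depends_on_const)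

lemma sum:
  assumes "finite I" and "\<And>x. x \<in> I \<Longrightarrow> depends_on L (g x)"
  shows "\<Phi> (\<lambda>s. \<Sum>x\<in>I. a x * g x s) = (\<Sum>x\<in>I. a x * \<Phi> (g x))"
  using assms
proof (induction I rule: finite_induct)
  case empty
  then show ?case by (simp add: zero)
next
  case (insert x I)
  have "\<Phi> (\<lambda>s. \<Sum>y\<in>insert x I. a y * g y s) = \<Phi> (\<lambda>s. a x * g x s + 1 * (\<Sum>y\<in>I. a y * g y s))"
    using insert.hyps by simp
  also have "\<dots> = a x * \<Phi> (g x) + 1 * \<Phi> (\<lambda>s. \<Sum>y\<in>I. a y * g y s)"
    by (rule linear) (use insert.prems in \<open>auto intro: depends_on_sum\<close>)
  finally show ?case
    using insert by simp
qed

lemma expansion: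
  assumes "finite L" and "depends_on L f"
  shows "\<Phi> f = (\<Sum>u\<in>configs_on L. f u * \<Phi> (Fcyl L u))"
proof -
  have "f = (\<lambda>s. \<Sum>u\<in>configs_on L. f u * Fcyl L u s)"
    by (rule ext) (rule depends_on_expansion[OF assms])
  then have "\<Phi> f = \<Phi> (\<lambda>s. \<Sum>u\<in>configs_on L. f u * Fcyl L u s)"
    by (rule arg_cong)
  also have "\<dots> = (\<Sum>u\<in>configs_on L. f u * \<Phi> (Fcyl L u))"
    by (rule sum) (simp_all add: finite_configs_on depends_on_Fcyl assms(1))
  finally show ?thesis .
qed

end

lemma sum_flip_sites_eq_superset:
  fixes \<Phi> :: "('d config \<Rightarrow> real) \<Rightarrow> real"
  assumes "\<Phi> (\<lambda>s. 0) = 0" and "finite K" and "{i. \<exists>s. f (flip i s) \<noteq> f s} \<subseteq> K"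
  shows "(\<Sum>i\<in>{i. \<exists>s. f (flip i s) \<noteq> f s}. \<Phi> (\<lambda>s. c i s * (f (flip i s) - f s)))
       = (\<Sum>i\<in>K. \<Phi> (\<lambda>s. c i s * (f (flip i s) - f s)))"
  by (rule sum.mono_neutral_left[OF assms(2,3)]) (auto simp: assms(1))

lemma space_spinM: "space spinM = UNIV"
  by (simp add: spinM_def space_PiM)

lemma cylinder_in_sets_spinM:
  assumes "finite L"
  shows "cylinder L u \<in> sets spinM"
proof -
  have "{s \<in> space spinM. \<forall>i\<in>L. s i = u i} \<in> sets spinM"
    by (rule sets.sets_Collect_finite_All[OF _ assms]) (simp add: spinM_def)
  then show ?thesis
    by (simp add: space_spinM cylinder_def)
qed

lemma depends_on_eq_sum_indicator:
  fixes L :: "'d::finite site set"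
  assumes "finite L" and "depends_on L f"
  shows "f = (\<lambda>s. \<Sum>u\<in>configs_on L. f u * indicator (cylinder L u) s)"
proof
  fix s
  show "f s = (\<Sum>u\<in>configs_on L. f u * indicator (cylinder L u) s)"
    using depends_on_expansion[OF assms, of s] by (simp add: Fcyl_eq_indicator[OF assms(1)])
qed

lemma borel_measurable_depends_on:
  fixes L :: "'d::finite site set"
  assumes "finite L" and "depends_on L f" and "sets \<mu> = sets spinM"
  shows "f \<in> borel_measurable \<mu>"
proof -
  have "(\<lambda>s. \<Sum>u\<in>configs_on L. f u * indicator (cylinder L u) s) \<in> borel_measurable \<mu>"
    using cylinder_in_sets_spinM[OF assms(1)] assms(3)
    by (intro borel_measurable_sum borel_measurable_times borel_measurable_const
        borel_measurable_indicator) auto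
  then show ?thesis
    using depends_on_eq_sum_indicator[OF assms(1,2)] by simp
qed

lemma integrable_PS:
  fixes f :: "'d::finite config \<Rightarrow> real"
  assumes "is_prob_on_S \<mu>" and "f \<in> PS"
  shows "integrable \<mu> f"
proof -
  interpret prob_space \<mu>
    using assms(1) by (simp add: is_prob_on_S_def)
  obtain L where L: "finite L" "depends_on L f"
    using assms(2) by (auto simp: PS_iff_depends_on)
  show ?thesis
  proof (rule integrable_const_bound)
    show "AE s in \<mu>. norm (f s) \<le> (\<Sum>u\<in>configs_on L. \<bar>f u\<bar>)"
      using abs_le_sum_configs_on[OF L] by simp
    show "f \<in> borel_measurable \<mu>"
      using L assms(1) by (intro borel_measurable_depends_on) (auto simp: is_prob_on_S_def)
  qed
qed

section \<open>Feasible points of the linear programs\<close>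

context
  fixes c :: "'d::finite site \<Rightarrow> 'd config \<Rightarrow> real" and n :: nat
    and M :: "('d config \<Rightarrow> real) \<Rightarrow> real"
  assumes feasible: "LP_feasible c n M"
begin

lemma LP_feasible_local_linear: "local_linear_functional (D n) M"
  using feasible by unfold_locales (simp add: LP_feasible_def Pn_iff_depends_on)

lemma LP_feasible_nonneg:
  assumes "depends_on (D n) f" and "\<And>s. 0 \<le> f s"
  shows "0 \<le> M f"
  using feasible assms
  by (simp add: local_linear_functional.expansion[OF LP_feasible_local_linear finite_D]
      LP_feasible_def sum_nonneg)

lemma LP_feasible_abs_le:
  assumes "depends_on (D n) f" and "\<And>s. \<bar>f s\<bar> \<le> B"
  shows "\<bar>M f\<bar> \<le> B"
proof -
  interpret local_linear_functional "D n" M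
    by (rule LP_feasible_local_linear)
  have weights_nonneg: "0 \<le> M (Fcyl (D n) u)" for u
    using feasible by (simp add: LP_feasible_def)
  have "(\<Sum>u\<in>configs_on (D n). M (Fcyl (D n) u)) = M (\<lambda>s. 1)"
    by (simp add: expansion[OF finite_D] depends_on_const)
  also have "\<dots> = 1"
    using feasible by (simp add: LP_feasible_def)
  finally have weights_sum: "(\<Sum>u\<in>configs_on (D n). M (Fcyl (D n) u)) = 1" .
  have "\<bar>M f\<bar> \<le> (\<Sum>u\<in>configs_on (D n). \<bar>f u\<bar> * M (Fcyl (D n) u))"
    unfolding expansion[OF finite_D assms(1)]
    using sum_abs by (fastforce simp: abs_mult weights_nonneg intro: order_trans)
  also have "\<dots> \<le> (\<Sum>u\<in>configs_on (D n). B * M (Fcyl (D n) u))"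
    by (intro sum_mono mult_right_mono assms(2) weights_nonneg)
  also have "\<dots> = B"
    by (simp add: sum_distrib_left[symmetric] weights_sum)
  finally show ?thesis .
qed

end

lemma LP_feasible_Suc:
  fixes c :: "'d::finite site \<Rightarrow> 'd config \<Rightarrow> real"
  assumes feasible: "LP_feasible c (Suc n) M"
  shows "LP_feasible c n M"
proof -
  interpret local_linear_functional "D (Suc n)" M
    by (rule LP_feasible_local_linear[OF feasible])
  have D_sub: "D (n - 1) \<subseteq> D n" "D n \<subseteq> D (Suc n)"
    by (simp_all add: D_mono)
  have lift: "depends_on (D (Suc n)) f" if "depends_on (D n) f" for f
    using that D_sub(2) by (rule depends_on_mono)
  have "M (\<lambda>s. a * f s + b * g s) = a * M f + b * M g" if "f \<in> Pn n" "g \<in> Pn n" for f g a b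
    using that by (intro linear lift) (simp_all add: Pn_iff_depends_on)
  moreover have "0 \<le> M (Fcyl (D n) u)" for u
    by (intro LP_feasible_nonneg[OF feasible] lift depends_on_Fcyl finite_D Fcyl_nonneg)
  moreover have "M (smono A) = M (smono B)" if "A \<subseteq> D n" "B \<subseteq> D n" "lat_equiv A B" for A B
  proof -
    have "A \<subseteq> D (Suc n)" "B \<subseteq> D (Suc n)"
      using that(1,2) D_sub(2) by auto
    with feasible that(3) show ?thesis
      by (simp add: LP_feasible_def)
  qed
  moreover have "(\<Sum>i\<in>D (n - 1). M (\<lambda>s. c i s * (f (flip i s) - f s))) = 0"
    if "f \<in> Pn (n - 1)" for f
  proof -
    have f: "depends_on (D (n - 1)) f"
      using that by (simp add: Pn_iff_depends_on)
    have "f \<in> Pn (Suc n - 1)"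
      using depends_on_mono[OF f D_sub(1)] by (simp add: Pn_iff_depends_on)
    then have "(\<Sum>i\<in>D n. M (\<lambda>s. c i s * (f (flip i s) - f s))) = 0"
      using feasible by (simp add: LP_feasible_def)
    moreover have Z: "{i. \<exists>s. f (flip i s) \<noteq> f s} \<subseteq> D (n - 1)"
      by (rule flip_sites_subset[OF f])
    ultimately show ?thesis
      using sum_flip_sites_eq_superset[where \<Phi> = M, OF zero finite_D Z]
        sum_flip_sites_eq_superset[where \<Phi> = M, OF zero finite_D order_trans[OF Z D_sub(1)]]
      by simp
  qed
  ultimately show ?thesis
    using feasible by (auto simp: LP_feasible_def)
qed

lemma LP_feasible_mono:
  fixes c :: "'d::finite site \<Rightarrow> 'd config \<Rightarrow> real"
  assumes "n \<le> n'" and "LP_feasible c n' M"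
  shows "LP_feasible c n M"
  using assms by (induction n' rule: dec_induct) (auto intro: LP_feasible_Suc)

lemma integral_LP_feasible:
  fixes c :: "'d::finite site \<Rightarrow> 'd config \<Rightarrow> real"
  assumes \<mu>: "is_prob_on_S \<mu>" and sym: "lattice_symmetric \<mu>" and inv: "invariant c \<mu>"
  shows "LP_feasible c n (\<lambda>f. \<integral>s. f s \<partial>\<mu>)"
proof -
  interpret prob_space \<mu>
    using \<mu> by (simp add: is_prob_on_S_def)
  have integrable: "integrable \<mu> f" if "f \<in> Pn n" for f
    using that Pn_subset_PS by (auto intro: integrable_PS[OF \<mu>])
  have "(\<integral>s. a * f s + b * g s \<partial>\<mu>) = a * (\<integral>s. f s \<partial>\<mu>) + b * (\<integral>s. g s \<partial>\<mu>)"
    if "f \<in> Pn n" "g \<in> Pn n" for f g a b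
    using integrable[OF that(1)] integrable[OF that(2)] by simp
  moreover have "(\<integral>s. smono A s \<partial>\<mu>) = (\<integral>s. smono B s \<partial>\<mu>)"
    if A: "A \<subseteq> D n" and AB: "lat_equiv A B" for A B
  proof -
    obtain g where "g \<in> latG" "B = g ` A"
      using AB by (auto simp: lat_equiv_def)
    moreover have "finite A"
      using A finite_D by (rule finite_subset)
    ultimately show ?thesis
      using sym unfolding lattice_symmetric_def by blast
  qed
  moreover have "(\<Sum>i\<in>D (n - 1). \<integral>s. c i s * (f (flip i s) - f s) \<partial>\<mu>) = 0"
    if "f \<in> Pn (n - 1)" for f
  proof -
    have Z: "{i. \<exists>s. f (flip i s) \<noteq> f s} \<subseteq> D (n - 1)"
      using that by (intro flip_sites_subset) (simp add: Pn_iff_depends_on)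
    have "(\<Sum>i\<in>D (n - 1). \<integral>s. c i s * (f (flip i s) - f s) \<partial>\<mu>)
        = (\<Sum>i\<in>{i. \<exists>s. f (flip i s) \<noteq> f s}. \<integral>s. c i s * (f (flip i s) - f s) \<partial>\<mu>)"
      by (rule sum_flip_sites_eq_superset[where \<Phi> = "\<lambda>f. \<integral>s. f s \<partial>\<mu>", OF _ finite_D Z, symmetric])
        simp
    also have "\<dots> = 0"
      using inv that Pn_subset_PS unfolding invariant_def by blast
    finally show ?thesis .
  qed
  ultimately show ?thesis
    by (auto simp: LP_feasible_def prob_space Fcyl_nonneg finite_D)
qed

section \<open>Positive normalized functionals and their measures\<close>

lemma measurable_sign: "(\<lambda>x i. 0 < x i) \<in> PiM UNIV (\<lambda>_. borel :: real measure) \<rightarrow>\<^sub>M spinM"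
proof -
  have "(\<lambda>x :: 'd site \<Rightarrow> real. 0 < x i) \<in> PiM UNIV (\<lambda>_. borel) \<rightarrow>\<^sub>M count_space UNIV" for i
    by measurable
  then show ?thesis
    unfolding spinM_def by (intro measurable_PiM_single'[where f = "\<lambda>i x. 0 < x i"]) auto
qed

locale PS_state =
  fixes \<Lambda> :: "('d::finite config \<Rightarrow> real) \<Rightarrow> real"
  assumes linear: "f \<in> PS \<Longrightarrow> g \<in> PS \<Longrightarrow> \<Lambda> (\<lambda>s. a * f s + b * g s) = a * \<Lambda> f + b * \<Lambda> g"
    and nonneg: "f \<in> PS \<Longrightarrow> (\<And>s. 0 \<le> f s) \<Longrightarrow> 0 \<le> \<Lambda> f"
    and normalized: "\<Lambda> (\<lambda>s. 1) = 1"
begin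

lemma local_linear:
  assumes "finite L"
  shows "local_linear_functional L \<Lambda>"
proof
  fix f g :: "'d config \<Rightarrow> real" and a b :: real
  assume "depends_on L f" "depends_on L g"
  with assms have "f \<in> PS" "g \<in> PS"
    unfolding PS_iff_depends_on by blast+
  then show "\<Lambda> (\<lambda>s. a * f s + b * g s) = a * \<Lambda> f + b * \<Lambda> g"
    by (rule linear)
qed

lemma expansion:
  assumes "finite L" and "depends_on L f"
  shows "\<Lambda> f = (\<Sum>u\<in>configs_on L. f u * \<Lambda> (Fcyl L u))"
  using local_linear_functional.expansion[OF local_linear[OF assms(1)] assms] .

lemma cylinder_weight_nonneg:
  assumes "finite L"
  shows "0 \<le> \<Lambda> (Fcyl L u)"
proof (rule nonneg)
  show "Fcyl L u \<in> PS"
    unfolding PS_iff_depends_on using assms depends_on_Fcyl by blast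
qed (rule Fcyl_nonneg[OF assms])

lemma cylinder_weights_sum: "finite L \<Longrightarrow> (\<Sum>u\<in>configs_on L. \<Lambda> (Fcyl L u)) = 1"
  using expansion[of L "\<lambda>s. 1"]
  by (simp add: depends_on_const normalized)

lemma cylinder_weight_consistent:
  assumes "finite H" and "J \<subseteq> H" and "u \<in> configs_on J"
  shows "\<Lambda> (Fcyl J u) = (\<Sum>v\<in>{v\<in>configs_on H. restrict_config J v = u}. \<Lambda> (Fcyl H v))"
proof -
  have J: "finite J"
    using assms(1,2) by (rule finite_subset[rotated])
  have "\<Lambda> (Fcyl J u) = (\<Sum>v\<in>configs_on H. Fcyl J u v * \<Lambda> (Fcyl H v))"
    by (rule expansion[OF assms(1)])
      (auto intro: depends_on_mono[OF depends_on_Fcyl[OF J] assms(2)] assms(1))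
  also have "\<dots> = (\<Sum>v\<in>configs_on H. if restrict_config J v = u then \<Lambda> (Fcyl H v) else 0)"
    by (intro sum.cong refl) (simp add: Fcyl_eq_indicator[OF J] restrict_config_eq_iff[OF assms(3)] indicator_def)
  also have "\<dots> = (\<Sum>v\<in>{v\<in>configs_on H. restrict_config J v = u}. \<Lambda> (Fcyl H v))"
    by (simp add: sum.inter_filter finite_configs_on assms(1))
  finally show ?thesis .
qed

definition marginal_weight :: "'d site set \<Rightarrow> 'd config \<Rightarrow> real" where
  "marginal_weight L u = (if u \<in> configs_on L then \<Lambda> (Fcyl L u) else 0)"

lemma marginal_weight_nonneg: "finite L \<Longrightarrow> 0 \<le> marginal_weight L u"
  by (simp add: marginal_weight_def cylinder_weight_nonneg)

lemma nn_integral_marginal_weight: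
  assumes "finite L"
  shows "(\<integral>\<^sup>+u. marginal_weight L u \<partial>count_space UNIV) = 1"
proof -
  have "(\<integral>\<^sup>+u. marginal_weight L u \<partial>count_space UNIV)
      = (\<integral>\<^sup>+u. ennreal (marginal_weight L u) * indicator (configs_on L) u \<partial>count_space UNIV)"
    by (rule nn_integral_cong) (simp add: marginal_weight_def)
  also have "\<dots> = (\<integral>\<^sup>+u. marginal_weight L u \<partial>count_space (configs_on L))"
    by (rule nn_integral_count_space_indicator[symmetric]) (simp add: NO_MATCH_def)
  also have "\<dots> = (\<Sum>u\<in>configs_on L. ennreal (marginal_weight L u))"
    by (rule nn_integral_count_space_finite[OF finite_configs_on[OF assms]])
  also have "\<dots> = 1"
    using cylinder_weights_sum[OF assms]
    by (simp add: sum_ennreal cylinder_weight_nonneg[OF assms] marginal_weight_def)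
  finally show ?thesis .
qed

definition marginal :: "'d site set \<Rightarrow> 'd config pmf" where
  "marginal L = embed_pmf (marginal_weight L)"

lemma pmf_marginal: "finite L \<Longrightarrow> pmf (marginal L) u = marginal_weight L u"
  unfolding marginal_def
  by (rule pmf_embed_pmf[OF marginal_weight_nonneg nn_integral_marginal_weight])

lemma measure_marginal:
  assumes "finite L"
  shows "measure_pmf.prob (marginal L) X = (\<Sum>u\<in>X \<inter> configs_on L. marginal_weight L u)"
proof -
  have "set_pmf (marginal L) \<subseteq> configs_on L"
    unfolding marginal_def
    by (subst set_embed_pmf[OF marginal_weight_nonneg nn_integral_marginal_weight])
      (auto simp: assms marginal_weight_def)
  then have "measure_pmf.prob (marginal L) X = measure_pmf.prob (marginal L) (X \<inter> configs_on L)"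
    by (metis (no_types) Int_assoc inf.absorb_iff2 measure_Int_set_pmf)
  also have "\<dots> = (\<Sum>u\<in>X \<inter> configs_on L. marginal_weight L u)"
    by (simp add: measure_measure_pmf_finite finite_configs_on assms pmf_marginal)
  finally show ?thesis .
qed

lemma marginal_eq_map_restrict:
  assumes H: "finite H" and "J \<subseteq> H"
  shows "marginal J = map_pmf (restrict_config J) (marginal H)"
proof (rule pmf_eqI)
  fix u
  have J: "finite J"
    using assms by (rule finite_subset[rotated])
  have "pmf (map_pmf (restrict_config J) (marginal H)) u
      = (\<Sum>v\<in>restrict_config J -` {u} \<inter> configs_on H. marginal_weight H v)"
    by (simp add: pmf_map measure_marginal[OF H])
  also have "\<dots> = marginal_weight J u"
  proof (cases "u \<in> configs_on J")
    case True
    have "restrict_config J -` {u} \<inter> configs_on H = {v\<in>configs_on H. restrict_config J v = u}"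
      by auto
    then show ?thesis
      using cylinder_weight_consistent[OF assms True] True by (simp add: marginal_weight_def)
  next
    case False
    then have "restrict_config J -` {u} \<inter> configs_on H = {}"
      using restrict_config_in_configs_on by blast
    then show ?thesis
      using False by (simp add: marginal_weight_def)
  qed
  finally show "pmf (marginal J) u = pmf (map_pmf (restrict_config J) (marginal H)) u"
    by (simp add: pmf_marginal[OF J])
qed

text \<open>The extension theorem of the library is stated for Polish coordinate spaces, so the
  marginals are transported to \<open>\<real>\<^sup>J\<close> through the spins.\<close>
definition spin_marginal :: "'d site set \<Rightarrow> ('d site \<Rightarrow> real) measure" where
  "spin_marginal J = distr (marginal J) (PiM J (\<lambda>_. borel)) (\<lambda>u. restrict (spin u) J)"

lemma spin_marginal_projective: "polish_projective UNIV spin_marginal"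
  unfolding polish_projective_def
proof (rule projective_family.intro)
  fix J H :: "'d site set"
  assume JH: "J \<subseteq> H" "finite H" "H \<subseteq> UNIV"
  have "distr (spin_marginal H) (PiM J (\<lambda>_. borel)) (\<lambda>x. restrict x J)
      = distr (marginal H) (PiM J (\<lambda>_. borel)) ((\<lambda>x. restrict x J) \<circ> (\<lambda>u. restrict (spin u) H))"
    unfolding spin_marginal_def
    by (rule distr_distr[OF measurable_restrict_subset[OF JH(1)]]) (simp add: space_PiM)
  also have "(\<lambda>x. restrict x J) \<circ> (\<lambda>u. restrict (spin u) H) = (\<lambda>u. restrict (spin u) J) \<circ> restrict_config J"
    using JH(1) by (auto simp: restrict_config_def spin_def restrict_def fun_eq_iff)
  also have "distr (marginal H) (PiM J (\<lambda>_. borel)) \<dots>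
      = distr (distr (marginal H) (count_space UNIV) (restrict_config J))
          (PiM J (\<lambda>_. borel)) (\<lambda>u. restrict (spin u) J)"
    by (rule distr_distr[symmetric]) (simp_all add: measurable_count_space_eq1 space_PiM)
  also have "\<dots> = spin_marginal J"
    by (simp add: spin_marginal_def marginal_eq_map_restrict[OF JH(2,1)] map_pmf_rep_eq)
  finally show "spin_marginal J = distr (spin_marginal H) (PiM J (\<lambda>_. borel)) (\<lambda>x. restrict x J)"
    by (rule sym)
next
  fix J :: "'d site set"
  have "(\<lambda>u. restrict (spin u) J) \<in> measure_pmf (marginal J) \<rightarrow>\<^sub>M PiM J (\<lambda>_. borel)"
    by (simp add: space_PiM)
  then show "prob_space (spin_marginal J)"
    unfolding spin_marginal_def by (rule measure_pmf.prob_space_distr)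
qed

definition repr_measure :: "'d config measure" where
  "repr_measure = distr (projective_family.lim UNIV spin_marginal (\<lambda>_. borel)) spinM (\<lambda>x i. 0 < x i)"

lemma prob_on_S_repr_measure: "is_prob_on_S repr_measure"
proof -
  interpret polish_projective UNIV spin_marginal
    by (rule spin_marginal_projective)
  show ?thesis
    unfolding is_prob_on_S_def repr_measure_def
    by (simp add: P.prob_space_distr measurable_cong_sets[OF sets_lim refl] measurable_sign)
qed

lemma measure_repr_measure_cylinder:
  assumes L: "finite L" and u: "u \<in> configs_on L"
  shows "measure repr_measure (cylinder L u) = \<Lambda> (Fcyl L u)"
proof -
  interpret polish_projective UNIV spin_marginal
    by (rule spin_marginal_projective)
  have sign_measurable: "(\<lambda>x i. 0 < x i) \<in> lim \<rightarrow>\<^sub>M spinM"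
    by (simp add: measurable_cong_sets[OF sets_lim refl] measurable_sign)
  define X where "X = PiE L (\<lambda>i. if u i then {0<..} else {..0 :: real})"
  have X: "X \<in> sets (PiM L (\<lambda>_. borel))"
    unfolding X_def by (rule sets_PiM_I_finite[OF L]) auto
  have "space lim = UNIV"
    using sets_eq_imp_space_eq[OF sets_lim] by (simp add: space_PiM)
  then have "(\<lambda>x i. 0 < x i) -` cylinder L u \<inter> space lim = prod_emb UNIV (\<lambda>_. borel) L X"
    by (auto simp: cylinder_def X_def prod_emb_def PiE_iff space_PiM split: if_splits)
      (metis linorder_not_le)+
  then have "measure repr_measure (cylinder L u) = measure lim (prod_emb UNIV (\<lambda>_. borel) L X)"
    unfolding repr_measure_def
    by (simp add: measure_distr[OF sign_measurable cylinder_in_sets_spinM[OF L]])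
  also have "\<dots> = measure (spin_marginal L) X"
    using L X by (simp add: measure_lim_emb)
  also have "\<dots> = measure_pmf.prob (marginal L)
      ((\<lambda>v. restrict (spin v) L) -` X \<inter> space (measure_pmf (marginal L)))"
    unfolding spin_marginal_def by (rule measure_distr[OF _ X]) (simp add: space_PiM)
  also have "\<dots> = measure_pmf.prob (marginal L) (cylinder L u)"
    by (rule arg_cong[where f = "measure_pmf.prob (marginal L)"])
      (auto simp: X_def cylinder_def spin_def PiE_iff split: if_splits)
  also have "\<dots> = \<Lambda> (Fcyl L u)"
  proof -
    have "cylinder L u \<inter> configs_on L = {u}"
      using u by (auto simp: cylinder_def configs_on_def fun_eq_iff)
    then show ?thesis
      by (simp add: measure_marginal[OF L] marginal_weight_def u)
  qed
  finally show ?thesis .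
qed

lemma integral_repr_measure:
  assumes "f \<in> PS"
  shows "(\<integral>s. f s \<partial>repr_measure) = \<Lambda> f"
proof -
  interpret prob_space repr_measure
    using prob_on_S_repr_measure by (simp add: is_prob_on_S_def)
  have sets: "sets repr_measure = sets spinM"
    using prob_on_S_repr_measure by (simp add: is_prob_on_S_def)
  obtain L where L: "finite L" "depends_on L f"
    using assms by (auto simp: PS_iff_depends_on)
  have "(\<integral>s. f s \<partial>repr_measure)
      = (\<integral>s. (\<Sum>u\<in>configs_on L. f u * indicator (cylinder L u) s) \<partial>repr_measure)"
    by (rule arg_cong[OF depends_on_eq_sum_indicator[OF L]])
  also have "\<dots> = (\<Sum>u\<in>configs_on L. \<integral>s. f u * indicator (cylinder L u) s \<partial>repr_measure)"
    using cylinder_in_sets_spinM[OF L(1)]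
    by (intro Bochner_Integration.integral_sum integrable_mult_right integrable_real_indicator)
      (simp_all add: sets emeasure_finite less_top[symmetric])
  also have "\<dots> = (\<Sum>u\<in>configs_on L. f u * measure repr_measure (cylinder L u))"
    using cylinder_in_sets_spinM[OF L(1)] by (simp add: sets emeasure_finite)
  also have "\<dots> = (\<Sum>u\<in>configs_on L. f u * \<Lambda> (Fcyl L u))"
    by (simp add: measure_repr_measure_cylinder L(1))
  also have "\<dots> = \<Lambda> f"
    by (rule expansion[OF L, symmetric])
  finally show ?thesis .
qed

lemma ex_representing_measure: "\<exists>\<mu>. is_prob_on_S \<mu> \<and> (\<forall>f\<in>PS. (\<integral>s. f s \<partial>\<mu>) = \<Lambda> f)"
  using prob_on_S_repr_measure integral_repr_measure by blast

end

section \<open>Limits of feasible points\<close>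

locale LP_feasible_seq =
  fixes c :: "'d::finite site \<Rightarrow> 'd config \<Rightarrow> real" and r :: "nat \<Rightarrow> nat"
    and M :: "nat \<Rightarrow> ('d config \<Rightarrow> real) \<Rightarrow> real"
  assumes feasible: "\<And>k. LP_feasible c (r k) (M k)"
    and r_tendsto: "filterlim r at_top sequentially"
    and moments_convergent: "\<And>A. finite A \<Longrightarrow> convergent (\<lambda>k. M k (smono A))"
begin

definition limit :: "('d config \<Rightarrow> real) \<Rightarrow> real" where
  "limit f = lim (\<lambda>k. M k f)"

lemma eventually_subset_D:
  assumes "finite L"
  shows "eventually (\<lambda>k. L \<subseteq> D (r k - 1)) sequentially"
proof -
  obtain N where N: "L \<subseteq> D N"
    using finite_imp_subset_D[OF assms] .
  have "eventually (\<lambda>k. Suc N \<le> r k) sequentially"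
    using r_tendsto by (simp add: filterlim_at_top)
  then show ?thesis
  proof (rule eventually_mono)
    fix k
    assume "Suc N \<le> r k"
    then have "D N \<subseteq> D (r k - 1)"
      by (intro D_mono) simp
    with N show "L \<subseteq> D (r k - 1)" by blast
  qed
qed

lemma eventually_depends_on_D:
  assumes "f \<in> PS"
  shows "eventually (\<lambda>k. depends_on (D (r k)) f) sequentially"
proof -
  obtain L where L: "finite L" "depends_on L f"
    using assms by (auto simp: PS_iff_depends_on)
  show ?thesis
    using eventually_subset_D[OF L(1)]
  proof (rule eventually_mono)
    fix k
    assume "L \<subseteq> D (r k - 1)"
    also have "\<dots> \<subseteq> D (r k)"
      by (simp add: D_mono)
    finally show "depends_on (D (r k)) f"
      by (rule depends_on_mono[OF L(2)])
  qed
qed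

lemma limit_eqI:
  assumes "eventually (\<lambda>k. M k f = X k) sequentially" and "X \<longlonglongrightarrow> x"
  shows "limit f = x"
  unfolding limit_def using assms by (simp add: tendsto_cong limI)

lemma tendsto_limit:
  assumes "f \<in> PS"
  shows "(\<lambda>k. M k f) \<longlonglongrightarrow> limit f"
proof -
  obtain \<A> a where \<A>: "finite \<A>" "\<forall>A\<in>\<A>. finite A" and f: "f = (\<lambda>s. \<Sum>A\<in>\<A>. a A * smono A s)"
    using assms unfolding PS_def Poly_on_def by blast
  have "eventually (\<lambda>k. M k f = (\<Sum>A\<in>\<A>. a A * M k (smono A))) sequentially"
  proof (rule eventually_mono[OF eventually_subset_D])
    show "finite (\<Union>\<A>)"
      using \<A> by (intro finite_Union) auto
    fix k
    assume "\<Union>\<A> \<subseteq> D (r k - 1)"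
    then have "depends_on (D (r k)) (smono A)" if "A \<in> \<A>" for A
      using that D_mono[of "r k - 1" "r k"] by (intro depends_on_smono) auto
    then show "M k f = (\<Sum>A\<in>\<A>. a A * M k (smono A))"
      unfolding f by (intro local_linear_functional.sum[OF LP_feasible_local_linear[OF feasible] \<A>(1)])
  qed
  moreover have "convergent (\<lambda>k. \<Sum>A\<in>\<A>. a A * M k (smono A))"
    using \<A>(2) by (intro convergent_sum convergent_mult convergent_const moments_convergent) auto
  ultimately have "convergent (\<lambda>k. M k f)"
    by (simp add: convergent_cong)
  then show ?thesis
    by (simp add: limit_def convergent_LIMSEQ_iff)
qed

lemma limit_state: "PS_state limit"
proof
  fix f g :: "'d config \<Rightarrow> real" and a b :: real
  assume fg: "f \<in> PS" "g \<in> PS"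
  show "limit (\<lambda>s. a * f s + b * g s) = a * limit f + b * limit g"
  proof (rule limit_eqI)
    show "eventually (\<lambda>k. M k (\<lambda>s. a * f s + b * g s) = a * M k f + b * M k g) sequentially"
      using eventually_conj[OF eventually_depends_on_D[OF fg(1)] eventually_depends_on_D[OF fg(2)]]
      by eventually_elim (simp add: local_linear_functional.linear[OF LP_feasible_local_linear[OF feasible]])
    show "(\<lambda>k. a * M k f + b * M k g) \<longlonglongrightarrow> a * limit f + b * limit g"
      using fg by (intro tendsto_intros tendsto_limit)
  qed
next
  fix f :: "'d config \<Rightarrow> real"
  assume f: "f \<in> PS" and nonneg: "\<And>s. 0 \<le> f s"
  show "0 \<le> limit f"
  proof (rule tendsto_lowerbound[OF tendsto_limit[OF f]])
    show "eventually (\<lambda>k. 0 \<le> M k f) sequentially"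
      using eventually_depends_on_D[OF f]
      by eventually_elim (rule LP_feasible_nonneg[OF feasible _ nonneg])
  qed simp
next
  show "limit (\<lambda>s. 1) = 1"
    using feasible by (intro limit_eqI[where X = "\<lambda>k. 1"]) (simp_all add: LP_feasible_def)
qed

lemma limit_smono_symmetric:
  assumes A: "finite A" and g: "g \<in> latG"
  shows "limit (smono A) = limit (smono (g ` A))"
proof (rule limit_eqI)
  show "(\<lambda>k. M k (smono (g ` A))) \<longlonglongrightarrow> limit (smono (g ` A))"
    using A by (intro tendsto_limit smono_in_PS) simp
  have equiv: "lat_equiv A (g ` A)"
    using g by (auto simp: lat_equiv_def)
  show "eventually (\<lambda>k. M k (smono A) = M k (smono (g ` A))) sequentially"
  proof (rule eventually_mono[OF eventually_subset_D])
    show "finite (A \<union> g ` A)"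
      using A by simp
    fix k
    assume "A \<union> g ` A \<subseteq> D (r k - 1)"
    then have "A \<subseteq> D (r k)" "g ` A \<subseteq> D (r k)"
      using D_mono[of "r k - 1" "r k"] by auto
    with equiv show "M k (smono A) = M k (smono (g ` A))"
      using feasible[of k] by (simp add: LP_feasible_def)
  qed
qed

lemma limit_invariant:
  assumes c_local: "\<And>i. depends_on (insert i (nbr i)) (c i)" and f: "f \<in> PS"
  shows "(\<Sum>i\<in>{i. \<exists>s. f (flip i s) \<noteq> f s}. limit (\<lambda>s. c i s * (f (flip i s) - f s))) = 0"
proof -
  let ?Z = "{i. \<exists>s. f (flip i s) \<noteq> f s}"
  let ?h = "\<lambda>i s. c i s * (f (flip i s) - f s)"
  obtain L where L: "finite L" "depends_on L f"
    using f by (auto simp: PS_iff_depends_on)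
  have Z: "?Z \<subseteq> L"
    by (rule flip_sites_subset[OF L(2)])
  have "(\<lambda>k. \<Sum>i\<in>?Z. M k (?h i)) \<longlonglongrightarrow> (\<Sum>i\<in>?Z. limit (?h i))"
    by (intro tendsto_sum tendsto_limit generator_term_in_PS[OF c_local f])
  moreover have "eventually (\<lambda>k. (\<Sum>i\<in>?Z. M k (?h i)) = 0) sequentially"
    using eventually_subset_D[OF L(1)]
  proof (rule eventually_mono)
    fix k
    assume LD: "L \<subseteq> D (r k - 1)"
    interpret local_linear_functional "D (r k)" "M k"
      by (rule LP_feasible_local_linear[OF feasible])
    have "f \<in> Pn (r k - 1)"
      using depends_on_mono[OF L(2) LD] by (simp add: Pn_iff_depends_on)
    then have "(\<Sum>i\<in>D (r k - 1). M k (?h i)) = 0"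
      using feasible[of k] by (simp add: LP_feasible_def)
    then show "(\<Sum>i\<in>?Z. M k (?h i)) = 0"
      using sum_flip_sites_eq_superset[where \<Phi> = "M k", OF zero finite_D order_trans[OF Z LD]]
      by simp
  qed
  then have "(\<lambda>k. \<Sum>i\<in>?Z. M k (?h i)) \<longlonglongrightarrow> 0"
    by (simp add: tendsto_cong)
  ultimately show ?thesis
    by (rule LIMSEQ_unique)
qed

lemma ex_limit_measure:
  assumes c_local: "\<And>i. depends_on (insert i (nbr i)) (c i)"
  shows "\<exists>\<mu>. is_prob_on_S \<mu> \<and> lattice_symmetric \<mu> \<and> invariant c \<mu> \<and> (\<forall>f\<in>PS. (\<integral>s. f s \<partial>\<mu>) = limit f)"
proof -
  interpret PS_state limit
    by (rule limit_state)
  obtain \<mu> where \<mu>: "is_prob_on_S \<mu>" and integral: "\<And>f. f \<in> PS \<Longrightarrow> (\<integral>s. f s \<partial>\<mu>) = limit f"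
    using ex_representing_measure by blast
  have "lattice_symmetric \<mu>"
    unfolding lattice_symmetric_def
  proof (intro allI impI, elim conjE)
    fix A :: "'d site set" and g :: "'d site \<Rightarrow> 'd site"
    assume A: "finite A" and g: "g \<in> latG"
    then show "(\<integral>s. smono A s \<partial>\<mu>) = (\<integral>s. smono (g ` A) s \<partial>\<mu>)"
      by (simp add: integral smono_in_PS limit_smono_symmetric[OF A g])
  qed
  moreover have "invariant c \<mu>"
    unfolding invariant_def
    by (simp add: integral generator_term_in_PS[OF c_local] limit_invariant[OF c_local])
  ultimately show ?thesis
    using \<mu> integral by blast
qed

end

lemma countable_diagonal_subseq:
  fixes X :: "nat \<Rightarrow> 'a \<Rightarrow> 'b::{real_normed_vector, heine_borel}"
  assumes I: "countable I" and bounded: "\<And>i. i \<in> I \<Longrightarrow> Bseq (\<lambda>n. X n i)"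
  shows "\<exists>q. strict_mono q \<and> (\<forall>i\<in>I. convergent (\<lambda>n. X (q n) i))"
proof (cases "I = {}")
  case True
  then show ?thesis
    using strict_mono_id by blast
next
  case False
  define P where "P k s \<longleftrightarrow> convergent (\<lambda>n. X (s n) (from_nat_into I k))" for k and s :: "nat \<Rightarrow> nat"
  interpret subseqs P
  proof
    fix k and s :: "nat \<Rightarrow> nat"
    have "Bseq (\<lambda>n. X (s n) (from_nat_into I k))"
      using Bseq_subseq[OF bounded[OF from_nat_into[OF False]]] .
    then have "bounded (range (\<lambda>n. X (s n) (from_nat_into I k)))"
      by (simp add: Elementary_Normed_Spaces.Bseq_eq_bounded)
    then obtain l r where "strict_mono r" "((\<lambda>n. X (s n) (from_nat_into I k)) \<circ> r) \<longlonglongrightarrow> l"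
      using bounded_imp_convergent_subsequence by blast
    then show "\<exists>r. strict_mono r \<and> P k (s \<circ> r)"
      unfolding P_def convergent_def by (auto simp: comp_def)
  qed
  have stable: "P k (s \<circ> r)" if "strict_mono r" "P k s" for k and r s :: "nat \<Rightarrow> nat"
    using convergent_subseq_convergent[of "\<lambda>n. X (s n) (from_nat_into I k)" r] that
    by (simp add: P_def comp_def)
  have "convergent (\<lambda>n. X (diagseq n) i)" if i: "i \<in> I" for i
  proof -
    obtain k where k: "from_nat_into I k = i"
      using from_nat_into_surj[OF I i] by blast
    have "P k (diagseq \<circ> (+) (Suc k))"
      by (rule diagseq_holds[OF stable])
    then show ?thesis
      using convergent_ignore_initial_segment[of "\<lambda>n. X (diagseq n) i" "Suc k"]
      unfolding P_def k by (simp add: comp_def ac_simps)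
  qed
  then show ?thesis
    using subseq_diagseq by blast
qed

lemma LP_feasible_moments_subseq:
  assumes feasible: "\<forall>n\<ge>N. LP_feasible c n (M n)"
  shows "\<exists>q. strict_mono q \<and> (\<forall>k. N \<le> q k) \<and> (\<forall>A. finite A \<longrightarrow> convergent (\<lambda>k. M (q k) (smono A)))"
proof -
  have "Bseq (\<lambda>n. M (n + N) (smono A))" if A: "finite A" for A
  proof (rule Bseq_eventually_mono[OF _ Bfun_const])
    obtain N' where N': "A \<subseteq> D N'"
      using finite_imp_subset_D[OF A] .
    have "norm (M (n + N) (smono A)) \<le> norm (1::real)" if n: "N' \<le> n" for n
    proof -
      have "LP_feasible c (n + N) (M (n + N))"
        using feasible by simp
      moreover have "A \<subseteq> D (n + N)"
        using N' D_mono[of N' "n + N"] n by auto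
      ultimately have "\<bar>M (n + N) (smono A)\<bar> \<le> 1"
        by (rule LP_feasible_abs_le[OF _ depends_on_smono]) (simp add: abs_smono)
      then show ?thesis
        by simp
    qed
    then show "eventually (\<lambda>n. norm (M (n + N) (smono A)) \<le> norm (1::real)) sequentially"
      by (auto simp: eventually_sequentially)
  qed
  then obtain q where q: "strict_mono q" "\<forall>A\<in>{A. finite A}. convergent (\<lambda>k. M (q k + N) (smono A))"
    using countable_diagonal_subseq[OF countable_Collect_finite, of "\<lambda>n A. M (n + N) (smono A)"]
    by auto
  have "strict_mono (\<lambda>k. q k + N)"
    using q(1) by (simp add: strict_mono_def)
  with q(2) show ?thesis
    by (intro exI[of _ "\<lambda>k. q k + N"]) auto
qed

section \<open>The optimal values\<close>

lemma LP_optimal_value_mono: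
  assumes opt: "\<forall>n\<ge>m. LP_optimal c p n (mstar n)" and "m \<le> n" and "n \<le> n'"
  shows "mstar n p \<le> mstar n' p"
proof -
  have "LP_feasible c n (mstar n')"
    using opt assms(2,3) by (intro LP_feasible_mono[OF assms(3)]) (simp add: LP_optimal_def)
  then show ?thesis
    using opt assms(2) by (simp add: LP_optimal_def)
qed

lemma LP_optimal_values_convergent:
  assumes p: "p \<in> Pn m" and opt: "\<forall>n\<ge>m. LP_optimal c p n (mstar n)"
  shows "convergent (\<lambda>n. mstar n p)"
proof -
  have p_local: "depends_on (D m) p"
    using p by (simp add: Pn_iff_depends_on)
  have "incseq (\<lambda>k. mstar (k + m) p)"
    by (rule incseq_SucI) (rule LP_optimal_value_mono[OF opt]; simp)
  moreover have "Bseq (\<lambda>k. mstar (k + m) p)"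
  proof (rule BseqI')
    fix k
    have "LP_feasible c (k + m) (mstar (k + m))"
      using opt by (simp add: LP_optimal_def)
    moreover have "depends_on (D (k + m)) p"
      by (rule depends_on_mono[OF p_local D_mono]) simp
    ultimately show "norm (mstar (k + m) p) \<le> (\<Sum>u\<in>configs_on (D m). \<bar>p u\<bar>)"
      using abs_le_sum_configs_on[OF finite_D p_local] by (simp add: LP_feasible_abs_le)
  qed
  ultimately have "convergent (\<lambda>k. mstar (k + m) p)"
    by (simp add: Bseq_monoseq_convergent incseq_imp_monoseq)
  then show ?thesis
    using convergent_ignore_initial_segment[of "\<lambda>n. mstar n p" m] by simp
qed

lemma LP_optimal_values_lim_le_integral:
  assumes p: "p \<in> Pn m" and opt: "\<forall>n\<ge>m. LP_optimal c p n (mstar n)"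
    and "is_prob_on_S \<mu>" and "lattice_symmetric \<mu>" and "invariant c \<mu>"
  shows "lim (\<lambda>n. mstar n p) \<le> (\<integral>s. p s \<partial>\<mu>)"
proof (rule LIMSEQ_le_const2)
  show "(\<lambda>n. mstar n p) \<longlonglongrightarrow> lim (\<lambda>n. mstar n p)"
    using LP_optimal_values_convergent[OF p opt] by (simp add: convergent_LIMSEQ_iff)
  show "\<exists>N. \<forall>n\<ge>N. mstar n p \<le> (\<integral>s. p s \<partial>\<mu>)"
    using opt integral_LP_feasible[OF assms(3-5)] by (auto simp: LP_optimal_def)
qed

lemma LP_optimal_subseq_measure:
  assumes rate: "transition_rate J h c" and p: "p \<in> Pn m"
    and opt: "\<forall>n\<ge>m. LP_optimal c p n (mstar n)" and "m \<le> N"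
  obtains q \<mu> where "strict_mono q" and "\<And>k. N \<le> q k"
    and "is_prob_on_S \<mu>" and "lattice_symmetric \<mu>" and "invariant c \<mu>"
    and "\<And>f. f \<in> PS \<Longrightarrow> (\<lambda>k. mstar (q k) f) \<longlonglongrightarrow> (\<integral>s. f s \<partial>\<mu>)"
    and "(\<integral>s. p s \<partial>\<mu>) = lim (\<lambda>n. mstar n p)"
proof -
  obtain q where q: "strict_mono q" "\<forall>k. N \<le> q k"
    and moments: "\<forall>A. finite A \<longrightarrow> convergent (\<lambda>k. mstar (q k) (smono A))"
    using LP_feasible_moments_subseq[of N c mstar] opt \<open>m \<le> N\<close> by (auto simp: LP_optimal_def)
  have "LP_feasible c (q k) (mstar (q k))" for k
    using opt le_trans[OF \<open>m \<le> N\<close> q(2)[rule_format]] by (simp add: LP_optimal_def)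
  then interpret LP_feasible_seq c q "\<lambda>k. mstar (q k)"
    using q moments by unfold_locales (auto simp: filterlim_subseq)
  obtain \<mu> where \<mu>: "is_prob_on_S \<mu>" "lattice_symmetric \<mu>" "invariant c \<mu>"
    and integral: "\<forall>f\<in>PS. (\<integral>s. f s \<partial>\<mu>) = limit f"
    using ex_limit_measure[OF transition_rate_depends_on[OF rate]] by blast
  have "p \<in> PS"
    using p Pn_subset_PS by blast
  have "(\<lambda>k. mstar (q k) p) \<longlonglongrightarrow> lim (\<lambda>n. mstar n p)"
    using LIMSEQ_subseq_LIMSEQ[OF LP_optimal_values_convergent[OF p opt, unfolded convergent_LIMSEQ_iff] q(1)]
    by (simp add: comp_def)
  then have "limit p = lim (\<lambda>n. mstar n p)"
    by (rule LIMSEQ_unique[OF tendsto_limit[OF \<open>p \<in> PS\<close>]])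
  with integral \<open>p \<in> PS\<close> have "(\<integral>s. p s \<partial>\<mu>) = lim (\<lambda>n. mstar n p)"
    by simp
  with q \<mu> integral show ?thesis
    using tendsto_limit by (intro that) auto
qed

theorem mainTheorem6:
  fixes J h :: real
    and c :: "'d::finite site \<Rightarrow> 'd config \<Rightarrow> real"
    and m :: nat
    and p :: "'d config \<Rightarrow> real"
    and mstar :: "nat \<Rightarrow> (('d config \<Rightarrow> real) \<Rightarrow> real)"
  assumes rate: "transition_rate J h c"
    and cov: "G_covariant c"
    and pP: "p \<in> Pn m"
    and opt: "\<forall>n\<ge>m. LP_optimal c p n (mstar n)"
  shows "convergent (\<lambda>n. mstar n p) \<and>
    (\<forall>l::nat. \<exists>r::nat \<Rightarrow> nat. strict_mono r \<and> (\<forall>k. max m l \<le> r k) \<and>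
       (\<forall>A. A \<subseteq> D l \<longrightarrow> convergent (\<lambda>k. mstar (r k) (smono A))) \<and>
       (\<exists>\<mu>. is_prob_on_S \<mu> \<and> lattice_symmetric \<mu> \<and> invariant c \<mu> \<and>
          (\<integral>s. p s \<partial>\<mu>) = lim (\<lambda>n. mstar n p) \<and>
          (\<forall>A. A \<subseteq> D l \<longrightarrow> (\<integral>s. smono A s \<partial>\<mu>) = lim (\<lambda>k. mstar (r k) (smono A))) \<and>
          (\<forall>\<mu>'. is_prob_on_S \<mu>' \<and> lattice_symmetric \<mu>' \<and> invariant c \<mu>' \<longrightarrow>
              (\<integral>s. p s \<partial>\<mu>) \<le> (\<integral>s. p s \<partial>\<mu>'))))"
proof -
  show ?thesis (is "_ \<and> (\<forall>l. \<exists>r. ?subseq_measure l r)")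
  proof (intro conjI allI)
    show "convergent (\<lambda>n. mstar n p)"
      using pP opt by (rule LP_optimal_values_convergent)
    fix l
    obtain q \<mu> where q: "strict_mono q" "\<And>k. max m l \<le> q k"
      and \<mu>: "is_prob_on_S \<mu>" "lattice_symmetric \<mu>" "invariant c \<mu>"
      and moments: "\<And>f. f \<in> PS \<Longrightarrow> (\<lambda>k. mstar (q k) f) \<longlonglongrightarrow> (\<integral>s. f s \<partial>\<mu>)"
      and integral_p: "(\<integral>s. p s \<partial>\<mu>) = lim (\<lambda>n. mstar n p)"
      using LP_optimal_subseq_measure[OF rate pP opt, of "max m l"] by auto
    have "?subseq_measure l q"
    proof (intro conjI allI impI exI[of _ \<mu>] \<mu> q integral_p)
      show "convergent (\<lambda>k. mstar (q k) (smono A))"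
        and "(\<integral>s. smono A s \<partial>\<mu>) = lim (\<lambda>k. mstar (q k) (smono A))" if "A \<subseteq> D l" for A
        using moments[OF smono_in_PS[OF finite_subset[OF that finite_D]]]
        by (auto intro: convergentI limI[symmetric])
      show "(\<integral>s. p s \<partial>\<mu>) \<le> (\<integral>s. p s \<partial>\<mu>')"
        if "is_prob_on_S \<mu>' \<and> lattice_symmetric \<mu>' \<and> invariant c \<mu>'" for \<mu>'
        unfolding integral_p using that by (intro LP_optimal_values_lim_le_integral[OF pP opt]) auto
    qed
    then show "\<exists>r. ?subseq_measure l r"
      by (rule exI[of _ q])
  qed
qed

end
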